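(* Let $\mathcal H$ be a Berge-$C_4$-free hypergraph (multi-hyperedges allowed), and let $H$ be a colored graph on the vertex set of $\mathcal H$ obtained as follows: for each hyperedge $h\in\mathcal H$ with $|h|\ge 4$, one places $|h|-3$ edges on vertices of $h$ such that the set of edges placed in $h$ forms a collection of pairwise vertex-disjoint triangles and single edges, and each edge placed in $h$ receives color $h$ (each edge of $H$ has exactly one color). Let $v$ be any vertex of $H$, let $d(v)$ be its degree in $H$, let $N_1(v)=\{x : vx\in E(H)\}$ and $N_2(v)=\{y\notin N_1(v)\cup\{v\} : \exists x\in N_1(v) \text{ with } xy\in E(H)\}$. Let $G=H[N_1(v)]$ be the subgraph of $H$ induced by $N_1(v)$. Let $G_{aux}$ be the graph on vertex set $N_1(v)$ in which $x\neq y$ are adjacent if and only if there exists $w\in N_2(v)$ with $wx,wy\in E(H)$, and let $G'_{aux}$ be the graph on $N_1(v)$ whose edge set is $E(G_{aux})\setminus E(G)$. Then the number of edges of $G'_{aux}$ satisfies $$|E(G'_{aux})| < d(v)^{9/5}.$$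
   Context: A Berge cycle of length $k$ in a hypergraph is an alternating sequence $v_1,h_1,\ldots,v_k,h_k$ of distinct vertices and distinct hyperedges with $v_i,v_{i+1}\in h_i$ for $1\le i\le k-1$ and $v_k,v_1\in h_k$; Berge-$C_4$-free means no such sequence with $k=4$ exists. In $H$, an edge $xy$ "has color $h$" if it was placed inside hyperedge $h$. $xy$ denotes the pair $\{x,y\}$. *)

theory Defs
  imports Complex_Main
begin

text \<open>Hypergraph: finite vertex set V, finite set of hyperedge labels E (allowing
multi-hyperedges), hyperedge contents hh :: 'e => 'v set.\<close>

definition berge_C4_free :: "'e set \<Rightarrow> ('e \<Rightarrow> 'v set) \<Rightarrow> bool" where
  "berge_C4_free E hh \<longleftrightarrow>
     \<not> (\<exists>v1 v2 v3 v4 e1 e2 e3 e4.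
          distinct [v1, v2, v3, v4] \<and> distinct [e1, e2, e3, e4] \<and>
          e1 \<in> E \<and> e2 \<in> E \<and> e3 \<in> E \<and> e4 \<in> E \<and>
          v1 \<in> hh e1 \<and> v2 \<in> hh e1 \<and>
          v2 \<in> hh e2 \<and> v3 \<in> hh e2 \<and>
          v3 \<in> hh e3 \<and> v4 \<in> hh e3 \<and>
          v4 \<in> hh e4 \<and> v1 \<in> hh e4)"

definition disjoint_triangles_and_edges :: "'v set set \<Rightarrow> bool" where
  "disjoint_triangles_and_edges F \<longleftrightarrow>
     (\<exists>P. (\<forall>S\<in>P. card S = 2 \<or> card S = 3) \<and> pairwise disjnt P \<and>
          F = (\<Union>S\<in>P. {p. p \<subseteq> S \<and> card p = 2}))"

definition colored_graph_of ::
  "'v set \<Rightarrow> 'e set \<Rightarrow> ('e \<Rightarrow> 'v set) \<Rightarrow> 'v set set \<Rightarrow> ('v set \<Rightarrow> 'e) \<Rightarrow> bool" where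
  "colored_graph_of V E hh EH col \<longleftrightarrow>
     (\<forall>p\<in>EH. p \<subseteq> V \<and> card p = 2 \<and> col p \<in> E) \<and>
     (\<forall>e\<in>E.
        (card (hh e) \<ge> 4 \<longrightarrow>
           (\<forall>p\<in>{p\<in>EH. col p = e}. p \<subseteq> hh e) \<and>
           card {p\<in>EH. col p = e} = card (hh e) - 3 \<and>
           disjoint_triangles_and_edges {p\<in>EH. col p = e}) \<and>
        (card (hh e) < 4 \<longrightarrow> {p\<in>EH. col p = e} = {}))"

definition N1 :: "'v set set \<Rightarrow> 'v \<Rightarrow> 'v set" where
  "N1 EH v = {x. {v, x} \<in> EH}"

definition N2 :: "'v set set \<Rightarrow> 'v \<Rightarrow> 'v set" where
  "N2 EH v = {y. y \<notin> N1 EH v \<and> y \<noteq> v \<and> (\<exists>x\<in>N1 EH v. {x, y} \<in> EH)}"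

definition G_edges :: "'v set set \<Rightarrow> 'v \<Rightarrow> 'v set set" where
  "G_edges EH v = {p\<in>EH. p \<subseteq> N1 EH v}"

definition Gaux_edges :: "'v set set \<Rightarrow> 'v \<Rightarrow> 'v set set" where
  "Gaux_edges EH v = {{x, y} | x y. x \<in> N1 EH v \<and> y \<in> N1 EH v \<and> x \<noteq> y \<and>
       (\<exists>w\<in>N2 EH v. {w, x} \<in> EH \<and> {w, y} \<in> EH)}"

definition Gaux'_edges :: "'v set set \<Rightarrow> 'v \<Rightarrow> 'v set set" where
  "Gaux'_edges EH v = Gaux_edges EH v - G_edges EH v"

end

theory Submission
  imports Defs
begin

(*
  Let N = N_1(v) and d = |N|. An edge xy of G'_aux with common neighbour w in N_2(v) closes the
  4-cycle v x w y of H. Since the hypergraph is Berge-C4-free, its four colors are not all distinct;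
  as each color class is a disjoint union of triangles and edges, two consecutive equal colors
  would make vw or xy an edge of H. Hence y lies in the hyperedge of the color of vx, or x in that
  of vy. Every color appears on at most two edges at v, so |E(G'_aux)| is at most twice the number
  of incidences between N and the hyperedges K of the colors at v. These form a Berge-C4-free star
  at v: a vertex lying in at least four of them lies in at most one that contains three such
  vertices, which bounds the incidences by 3d + 2|K| <= 5d. Thus |E(G'_aux)| <= min(10d, d choose 2),
  and this is less than d^(9/5).
*)

lemma card_le_mult_card_if_fibres_le:
  assumes "finite B" and "f ` A \<subseteq> B" and "\<And>b. b \<in> B \<Longrightarrow> card {a \<in> A. f a = b} \<le> k"
  shows "card A \<le> k * card B"
proof -
  have "A = (\<Union>b\<in>B. {a \<in> A. f a = b})" using assms(2) by auto
  then have "card A \<le> (\<Sum>b\<in>B. card {a \<in> A. f a = b})"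
    by (metis assms(1) card_UN_le)
  also have "\<dots> \<le> (\<Sum>b\<in>B. k)" using assms(3) by (rule sum_mono)
  finally show ?thesis by (simp add: mult.commute)
qed

lemma ex_notin_if_card_less:
  assumes "finite B" and "card B < card A"
  shows "\<exists>a\<in>A. a \<notin> B"
  using assms card_mono leD by blast

lemma disjoint_triangles_and_edges_trans:
  assumes "disjoint_triangles_and_edges F" and "{a, b} \<in> F" and "{b, c} \<in> F" and "a \<noteq> c"
  shows "{a, c} \<in> F"
proof -
  obtain P where P: "pairwise disjnt P" "F = (\<Union>S\<in>P. {p. p \<subseteq> S \<and> card p = 2})"
    using assms(1) unfolding disjoint_triangles_and_edges_def by blast
  obtain S where S: "S \<in> P" "{a, b} \<subseteq> S" using assms(2) P(2) by blast
  obtain S' where S': "S' \<in> P" "{b, c} \<subseteq> S'" using assms(3) P(2) by blast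
  have "S = S'" using S S' P(1) unfolding pairwise_def disjnt_def by blast
  then show ?thesis using S S' P(2) assms(4) by auto
qed

lemma disjoint_triangles_and_edges_degree_le_2:
  assumes "disjoint_triangles_and_edges F"
  shows "card {a. {v, a} \<in> F} \<le> 2"
proof (cases "{a. {v, a} \<in> F} = {}")
  case False
  obtain P where P: "\<forall>S\<in>P. card S = 2 \<or> card S = 3" "pairwise disjnt P"
    "F = (\<Union>S\<in>P. {p. p \<subseteq> S \<and> card p = 2})"
    using assms unfolding disjoint_triangles_and_edges_def by blast
  obtain a0 where "{v, a0} \<in> F" using False by blast
  then obtain S where S: "S \<in> P" "v \<in> S" using P(3) by blast
  have "card S = 2 \<or> card S = 3" using P(1) S(1) by blast
  then have "finite S" and "card S \<le> 3" by (auto intro: card_ge_0_finite)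
  have "{a. {v, a} \<in> F} \<subseteq> S - {v}"
  proof
    fix a assume "a \<in> {a. {v, a} \<in> F}"
    then obtain S' where S': "S' \<in> P" "{v, a} \<subseteq> S'" "card {v, a} = 2" using P(3) by auto
    then have "S' = S" using S P(2) unfolding pairwise_def disjnt_def by blast
    moreover have "a \<noteq> v" using S'(3) by auto
    ultimately show "a \<in> S - {v}" using S'(2) by blast
  qed
  moreover have "card (S - {v}) \<le> 2" using \<open>card S \<le> 3\<close> S(2) \<open>finite S\<close> by simp
  ultimately show ?thesis using \<open>finite S\<close> by (meson card_mono finite_Diff le_trans)
qed simp

lemma berge_C4_freeD:
  assumes "berge_C4_free E hh"
    and "distinct [v1, v2, v3, v4]" and "distinct [e1, e2, e3, e4]"
    and "e1 \<in> E" "e2 \<in> E" "e3 \<in> E" "e4 \<in> E"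
    and "{v1, v2} \<subseteq> hh e1" "{v2, v3} \<subseteq> hh e2" "{v3, v4} \<subseteq> hh e3" "{v4, v1} \<subseteq> hh e4"
  shows False
  using assms unfolding berge_C4_free_def by blast

locale berge_C4_free_star =
  fixes E :: "'e set" and hh :: "'e \<Rightarrow> 'v set" and v :: 'v and K :: "'e set"
  assumes C4_free: "berge_C4_free E hh"
    and K_subset: "K \<subseteq> E" and finite_K: "finite K" and v_in_K: "\<And>C. C \<in> K \<Longrightarrow> v \<in> hh C"
begin

definition incident :: "'v \<Rightarrow> 'e set" where
  "incident b = {C \<in> K. b \<in> hh C}"

lemma finite_incident: "finite (incident b)"
  using finite_K by (simp add: incident_def)

lemma no_path_between_rich_vertices:
  assumes "4 \<le> card (incident x)" and "3 \<le> card (incident y)"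
    and "distinct [v, x, b, y]" and "C1 \<in> K" "C2 \<in> K" "C1 \<noteq> C2"
    and "{x, b} \<subseteq> hh C1" and "{b, y} \<subseteq> hh C2"
  shows False
proof -
  have "card {C1, C2} < card (incident y)" using assms(2,6) by simp
  then obtain D where D: "D \<in> incident y" "D \<notin> {C1, C2}"
    using ex_notin_if_card_less[of "{C1, C2}"] by auto
  have "card {C1, C2, D} < card (incident x)" using assms(1,6) D(2) by (auto simp: card_insert_if)
  then obtain F where F: "F \<in> incident x" "F \<notin> {C1, C2, D}"
    using ex_notin_if_card_less[of "{C1, C2, D}"] by auto
  have "F \<in> K" "x \<in> hh F" "D \<in> K" "y \<in> hh D"
    using D(1) F(1) by (auto simp: incident_def)
  then show False
    using berge_C4_freeD[OF C4_free, of v x b y F C1 C2 D] assms D(2) F(2) K_subset v_in_K by auto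
qed

lemma unique_crowded_hyperedge:
  assumes "v \<notin> R" and rich: "\<And>x. x \<in> R \<Longrightarrow> 4 \<le> card (incident x)"
    and "b \<in> R" and C1: "C1 \<in> incident b" and C2: "C2 \<in> incident b"
    and "3 \<le> card (R \<inter> hh C1)" and "3 \<le> card (R \<inter> hh C2)"
  shows "C1 = C2"
proof (rule ccontr)
  assume "C1 \<noteq> C2"
  have "card {b} < card (R \<inter> hh C2)" using assms(7) by simp
  then obtain y where y: "y \<in> R" "y \<in> hh C2" "y \<noteq> b"
    using ex_notin_if_card_less[of "{b}"] by auto
  have "card {b, y} < card (R \<inter> hh C1)" using assms(6) by (auto simp: card_insert_if)
  then obtain x where x: "x \<in> R" "x \<in> hh C1" "x \<notin> {b, y}"
    using ex_notin_if_card_less[of "{b, y}"] by auto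
  have "distinct [v, x, b, y]" using assms(1,3) x y by auto
  moreover have "4 \<le> card (incident x)" "3 \<le> card (incident y)" using rich x(1) y(1) by force+
  moreover have "C1 \<in> K" "C2 \<in> K" "b \<in> hh C1" "b \<in> hh C2"
    using C1 C2 by (auto simp: incident_def)
  ultimately show False
    using no_path_between_rich_vertices[of x y b C1 C2] \<open>C1 \<noteq> C2\<close> x(2) y(2) by auto
qed

lemma card_rich_incidences_le:
  assumes "finite R" and "v \<notin> R" and "\<And>x. x \<in> R \<Longrightarrow> 4 \<le> card (incident x)"
  shows "card (Sigma R incident) \<le> 2 * card K + card R"
proof -
  define sparse where "sparse = {(b, C) \<in> Sigma R incident. card (R \<inter> hh C) \<le> 2}"
  define crowded where "crowded = {(b, C) \<in> Sigma R incident. 3 \<le> card (R \<inter> hh C)}"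
  have "Sigma R incident = sparse \<union> crowded" by (auto simp: sparse_def crowded_def)
  then have "card (Sigma R incident) \<le> card sparse + card crowded" by (metis card_Un_le)
  moreover have "card sparse \<le> 2 * card K"
  proof (rule card_le_mult_card_if_fibres_le[OF finite_K])
    show "snd ` sparse \<subseteq> K" by (auto simp: sparse_def incident_def)
    fix C
    show "card {p \<in> sparse. snd p = C} \<le> 2"
    proof (cases "card (R \<inter> hh C) \<le> 2")
      case True
      have "{p \<in> sparse. snd p = C} \<subseteq> (R \<inter> hh C) \<times> {C}"
        by (auto simp: sparse_def incident_def)
      then have "card {p \<in> sparse. snd p = C} \<le> card ((R \<inter> hh C) \<times> {C})"
        using assms(1) by (intro card_mono) auto
      with True show ?thesis by (simp add: card_cartesian_product)
    next
      case False
      then have "{p \<in> sparse. snd p = C} = {}" by (auto simp: sparse_def)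
      then show ?thesis by (metis card.empty le0)
    qed
  qed
  moreover have "card crowded \<le> card R"
  proof (rule card_inj_on_le[of fst])
    show "inj_on fst crowded"
      using unique_crowded_hyperedge[OF assms(2,3)] by (auto simp: crowded_def inj_on_def)
    show "fst ` crowded \<subseteq> R" by (auto simp: crowded_def)
  qed (rule assms(1))
  ultimately show ?thesis by linarith
qed

lemma card_incidences_le:
  assumes "finite N" and "v \<notin> N"
  shows "card (Sigma N incident) \<le> 3 * card N + 2 * card K"
proof -
  define R where "R = {b \<in> N. 4 \<le> card (incident b)}"
  have "R \<subseteq> N" and "finite R" using assms(1) by (auto simp: R_def)
  have "card (Sigma N incident) = (\<Sum>b\<in>N. card (incident b))"
    using assms(1) finite_incident by simp
  also have "\<dots> = (\<Sum>b\<in>N - R. card (incident b)) + (\<Sum>b\<in>R. card (incident b))"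
    using assms(1) \<open>R \<subseteq> N\<close> by (metis sum.subset_diff)
  also have "(\<Sum>b\<in>N - R. card (incident b)) \<le> 3 * card (N - R)"
    using sum_bounded_above[of "N - R" "\<lambda>b. card (incident b)" 3] by (force simp: R_def)
  also have "(\<Sum>b\<in>R. card (incident b)) = card (Sigma R incident)"
    using \<open>finite R\<close> finite_incident by simp
  also have "\<dots> \<le> 2 * card K + card R"
    using \<open>finite R\<close> \<open>R \<subseteq> N\<close> assms(2) by (intro card_rich_incidences_le) (auto simp: R_def)
  finally show ?thesis
    using card_Diff_subset[OF \<open>finite R\<close> \<open>R \<subseteq> N\<close>] card_mono[OF assms(1) \<open>R \<subseteq> N\<close>] by linarith
qed

end

lemma card_Gaux'_edges_le_choose_2:
  assumes "finite (N1 EH v)"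
  shows "card (Gaux'_edges EH v) \<le> card (N1 EH v) choose 2"
proof -
  have "Gaux'_edges EH v \<subseteq> {p. p \<subseteq> N1 EH v \<and> card p = 2}"
    unfolding Gaux'_edges_def Gaux_edges_def by auto
  then have "card (Gaux'_edges EH v) \<le> card {p. p \<subseteq> N1 EH v \<and> card p = 2}"
    using assms by (intro card_mono) auto
  also have "\<dots> = card (N1 EH v) choose 2" using assms by (rule n_subsets)
  finally show ?thesis .
qed

locale C4_free_coloring =
  fixes V :: "'v set" and E :: "'e set" and hh :: "'e \<Rightarrow> 'v set"
    and EH :: "'v set set" and col :: "'v set \<Rightarrow> 'e"
  assumes finite_V: "finite V" and C4_free: "berge_C4_free E hh"
    and coloring: "colored_graph_of V E hh EH col"
begin

lemma edge_subset_V: "p \<in> EH \<Longrightarrow> p \<subseteq> V"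
  and card_edge: "p \<in> EH \<Longrightarrow> card p = 2"
  and color_in_E: "p \<in> EH \<Longrightarrow> col p \<in> E"
  using coloring by (auto simp: colored_graph_of_def)

lemma color_class_structure:
  assumes "p \<in> EH"
  shows edge_subset_hyperedge: "p \<subseteq> hh (col p)"
    and color_class_disjoint_triangles_and_edges:
      "disjoint_triangles_and_edges {q \<in> EH. col q = col p}"
proof -
  let ?cls = "{q \<in> EH. col q = col p}"
  have "\<forall>e\<in>E. (4 \<le> card (hh e) \<longrightarrow> (\<forall>q\<in>{q \<in> EH. col q = e}. q \<subseteq> hh e) \<and>
      card {q \<in> EH. col q = e} = card (hh e) - 3 \<and> disjoint_triangles_and_edges {q \<in> EH. col q = e}) \<and>
      (card (hh e) < 4 \<longrightarrow> {q \<in> EH. col q = e} = {})"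
    using coloring unfolding colored_graph_of_def by (rule conjunct2)
  then have cls: "4 \<le> card (hh (col p)) \<longrightarrow> (\<forall>q\<in>?cls. q \<subseteq> hh (col p)) \<and>
      disjoint_triangles_and_edges ?cls"
    "card (hh (col p)) < 4 \<longrightarrow> ?cls = {}"
    using color_in_E[OF assms] by auto
  have "p \<in> ?cls" using assms by simp
  then have "4 \<le> card (hh (col p))" using cls(2) by (metis empty_iff not_le)
  then show "p \<subseteq> hh (col p)" "disjoint_triangles_and_edges ?cls"
    using cls(1) \<open>p \<in> ?cls\<close> by blast+
qed

lemma same_color_trans:
  assumes "{a, b} \<in> EH" and "{b, c} \<in> EH" and "col {a, b} = col {b, c}" and "a \<noteq> c"
  shows "{a, c} \<in> EH"
proof -
  have "{a, c} \<in> {q \<in> EH. col q = col {a, b}}"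
    using disjoint_triangles_and_edges_trans[OF color_class_disjoint_triangles_and_edges[OF assms(1)],
        of a b c] assms by simp
  then show ?thesis by simp
qed

lemma finite_N1: "finite (N1 EH v)"
proof (rule finite_subset[OF _ finite_V])
  show "N1 EH v \<subseteq> V" by (auto simp: N1_def dest: edge_subset_V)
qed

lemma not_in_N1: "v \<notin> N1 EH v"
  using card_edge by (fastforce simp: N1_def)

lemma card_N1_of_color_le_2: "card {a \<in> N1 EH v. col {v, a} = C} \<le> 2"
proof (cases "{a \<in> N1 EH v. col {v, a} = C} = {}")
  case False
  then obtain a0 where a0: "{v, a0} \<in> EH" "col {v, a0} = C" by (auto simp: N1_def)
  then have "{a \<in> N1 EH v. col {v, a} = C} = {a. {v, a} \<in> {q \<in> EH. col q = col {v, a0}}}"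
    by (auto simp: N1_def)
  then show ?thesis
    using disjoint_triangles_and_edges_degree_le_2[OF color_class_disjoint_triangles_and_edges[OF a0(1)]]
    by simp
qed (metis card.empty le0)

lemma four_cycle_colors_not_distinct:
  assumes "distinct [a, b, c, d]" and "{a, b} \<in> EH" "{b, c} \<in> EH" "{c, d} \<in> EH" "{d, a} \<in> EH"
  shows "\<not> distinct [col {a, b}, col {b, c}, col {c, d}, col {d, a}]"
proof
  assume "distinct [col {a, b}, col {b, c}, col {c, d}, col {d, a}]"
  with assms(1) show False
    by (rule berge_C4_freeD[OF C4_free])
      (use assms(2-5) edge_subset_hyperedge[OF assms(2)] edge_subset_hyperedge[OF assms(3)]
        edge_subset_hyperedge[OF assms(4)] edge_subset_hyperedge[OF assms(5)]
        in \<open>simp_all add: color_in_E\<close>)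
qed

lemma Gaux'_edge_in_hyperedge_of_v_edge:
  assumes "p \<in> Gaux'_edges EH v"
  obtains x y where "p = {x, y}" "x \<in> N1 EH v" "y \<in> N1 EH v" "y \<in> hh (col {v, x})"
proof -
  obtain x y w where p: "p = {x, y}" and xy: "x \<in> N1 EH v" "y \<in> N1 EH v" "x \<noteq> y"
    and w: "w \<in> N2 EH v" "{w, x} \<in> EH" "{w, y} \<in> EH"
    using assms unfolding Gaux'_edges_def Gaux_edges_def by blast
  have "{x, y} \<notin> EH" using assms xy unfolding p Gaux'_edges_def G_edges_def by auto
  have "{v, w} \<notin> EH" "w \<noteq> v" "w \<notin> N1 EH v" using w(1) by (auto simp: N2_def N1_def)
  have vx: "{v, x} \<in> EH" and vy: "{v, y} \<in> EH" using xy by (auto simp: N1_def)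
  have "y \<in> hh (col {v, x}) \<or> x \<in> hh (col {v, y})"
  proof (rule ccontr)
    assume not_in: "\<not> (y \<in> hh (col {v, x}) \<or> x \<in> hh (col {v, y}))"
    have "distinct [col {v, x}, col {x, w}, col {w, y}, col {y, v}]"
    proof -
      have "col {v, x} \<noteq> col {w, y}" "col {x, w} \<noteq> col {y, v}"
        using not_in edge_subset_hyperedge[OF w(3)] edge_subset_hyperedge[OF w(2)]
        by (auto simp: insert_commute)
      moreover have "col {v, x} \<noteq> col {x, w}" "col {w, y} \<noteq> col {y, v}"
        using same_color_trans[of v x w] same_color_trans[of w y v] vx vy w
          \<open>{v, w} \<notin> EH\<close> \<open>w \<noteq> v\<close> by (auto simp: insert_commute)
      moreover have "col {x, w} \<noteq> col {w, y}" "col {y, v} \<noteq> col {v, x}"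
        using same_color_trans[of x w y] same_color_trans[of y v x] vx vy w xy(3)
          \<open>{x, y} \<notin> EH\<close> by (auto simp: insert_commute)
      ultimately show ?thesis by auto
    qed
    moreover have "distinct [v, x, w, y]"
      using xy \<open>w \<noteq> v\<close> \<open>w \<notin> N1 EH v\<close> not_in_N1 by auto
    ultimately show False
      using four_cycle_colors_not_distinct[of v x w y] vx vy w by (auto simp: insert_commute)
  qed
  then show ?thesis using that p xy by (metis insert_commute)
qed

definition charged_pairs :: "'v \<Rightarrow> ('v \<times> 'v) set" where
  "charged_pairs v = {(a, b) \<in> N1 EH v \<times> N1 EH v. b \<in> hh (col {v, a})}"

lemma card_Gaux'_edges_le_card_charged_pairs:
  "card (Gaux'_edges EH v) \<le> card (charged_pairs v)"
proof -
  have "Gaux'_edges EH v \<subseteq> (\<lambda>(a, b). {a, b}) ` charged_pairs v"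
  proof
    fix p assume "p \<in> Gaux'_edges EH v"
    then obtain x y where "p = {x, y}" "(x, y) \<in> charged_pairs v"
      by (rule Gaux'_edge_in_hyperedge_of_v_edge) (auto simp: charged_pairs_def)
    then show "p \<in> (\<lambda>(a, b). {a, b}) ` charged_pairs v" by force
  qed
  moreover have "finite (charged_pairs v)"
  proof (rule finite_subset)
    show "charged_pairs v \<subseteq> N1 EH v \<times> N1 EH v" by (auto simp: charged_pairs_def)
  qed (simp add: finite_N1)
  ultimately show ?thesis
    by (meson card_image_le card_mono finite_imageI le_trans)
qed

lemma card_charged_pairs_le: "card (charged_pairs v) \<le> 10 * card (N1 EH v)"
proof -
  define N where "N = N1 EH v"
  define c where "c a = col {v, a}" for a
  have "finite N" by (simp add: N_def finite_N1)
  interpret star: berge_C4_free_star E hh v "c ` N"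
  proof
    show "berge_C4_free E hh" by (rule C4_free)
    show "c ` N \<subseteq> E" by (auto simp: c_def N_def N1_def intro: color_in_E)
    show "finite (c ` N)" using \<open>finite N\<close> by simp
    show "v \<in> hh C" if "C \<in> c ` N" for C
      using that by (auto simp: c_def N_def N1_def dest: edge_subset_hyperedge)
  qed
  have "card (charged_pairs v) \<le> 2 * card (Sigma N star.incident)"
  proof (rule card_le_mult_card_if_fibres_le[where f = "\<lambda>(a, b). (b, c a)"])
    show "finite (Sigma N star.incident)" using \<open>finite N\<close> star.finite_incident by simp
    show "(\<lambda>(a, b). (b, c a)) ` charged_pairs v \<subseteq> Sigma N star.incident"
      unfolding star.incident_def by (auto simp: charged_pairs_def N_def c_def)
    fix bC :: "'v \<times> 'e"
    obtain b C where bC: "bC = (b, C)" by fastforce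
    let ?fibre = "{p \<in> charged_pairs v. (\<lambda>(a, b). (b, c a)) p = bC}"
    have "?fibre \<subseteq> {a \<in> N. c a = C} \<times> {b}"
      by (auto simp: charged_pairs_def bC N_def)
    then have "card ?fibre \<le> card ({a \<in> N. c a = C} \<times> {b})"
      using \<open>finite N\<close> by (intro card_mono) auto
    also have "\<dots> \<le> 2"
      using card_N1_of_color_le_2[of v C] by (simp add: card_cartesian_product N_def c_def)
    finally show "card ?fibre \<le> 2" .
  qed
  also have "\<dots> \<le> 2 * (3 * card N + 2 * card (c ` N))"
    using star.card_incidences_le[OF \<open>finite N\<close>] not_in_N1 by (simp add: N_def)
  also have "\<dots> \<le> 10 * card N" using card_image_le[OF \<open>finite N\<close>, of c] by simp
  finally show ?thesis by (simp add: N_def)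
qed

end

lemma real_less_powr_9_5:
  fixes d g :: nat
  assumes "d \<ge> 1" and "g \<le> 10 * d" and "g \<le> d choose 2"
  shows "real g < real d powr (9/5)"
proof -
  define t where "t = real d powr (1/5)"
  have "t > 0" using assms(1) by (simp add: t_def)
  have d_eq: "real d = t ^ 5"
    using assms(1) by (simp add: t_def powr_power)
  have rhs_eq: "real d powr (9/5) = t ^ 9"
    using assms(1) by (simp add: t_def powr_power powr_powr)
  show ?thesis
  proof (cases "t < 2")
    case True
    have "2 * g \<le> d * (d - 1)" using assms(3) unfolding choose_two by linarith
    then have "real (2 * g) \<le> real (d * (d - 1))" by (rule of_nat_mono)
    then have "real g \<le> real d * (real d - 1) / 2"
      using assms(1) by simp
    also have "\<dots> < real d ^ 2 / 2"
      using assms(1) by (simp add: power2_eq_square)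
    also have "\<dots> = t ^ 10 / 2" by (simp add: d_eq flip: power_mult)
    also have "\<dots> = t ^ 9 * t / 2" by (simp flip: power_Suc2)
    also have "\<dots> < t ^ 9" using True \<open>t > 0\<close> by simp
    finally show ?thesis by (simp add: rhs_eq)
  next
    case False
    have "real g \<le> 10 * t ^ 5" using assms(2) d_eq by simp
    also have "\<dots> < 2 ^ 4 * t ^ 5" using \<open>t > 0\<close> by simp
    also have "\<dots> \<le> t ^ 4 * t ^ 5"
      using False by (intro mult_right_mono power_mono) auto
    finally show ?thesis by (simp add: rhs_eq flip: power_add)
  qed
qed

theorem lemma2:
  fixes V :: "'v set" and E :: "'e set" and hh :: "'e \<Rightarrow> 'v set"
    and EH :: "'v set set" and col :: "'v set \<Rightarrow> 'e" and v :: 'v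
  assumes "finite V" and "finite E" and "\<forall>e\<in>E. hh e \<subseteq> V"
    and "berge_C4_free E hh"
    and "colored_graph_of V E hh EH col"
    and "v \<in> V"
    and "N1 EH v \<noteq> {}"
  shows "real (card (Gaux'_edges EH v)) < real (card (N1 EH v)) powr (9/5)"
proof -
  interpret C4_free_coloring V E hh EH col
    using assms(1,4,5) by unfold_locales
  have "1 \<le> card (N1 EH v)" using assms(7) finite_N1 by (simp add: Suc_le_eq card_gt_0_iff)
  moreover have "card (Gaux'_edges EH v) \<le> 10 * card (N1 EH v)"
    using card_Gaux'_edges_le_card_charged_pairs card_charged_pairs_le by (rule le_trans)
  moreover have "card (Gaux'_edges EH v) \<le> card (N1 EH v) choose 2"
    using finite_N1 by (rule card_Gaux'_edges_le_choose_2)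
  ultimately show ?thesis by (rule real_less_powr_9_5)
qed

end
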